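(* Let $X$ be a compactum, let $n\geq2$, and let $f:X\to X$ be a function. Consider the statements: (1) $f$ is Touhey; (2) $F_n(f)$ is Touhey; (3) $SF_n(f)$ is Touhey. Then (2) and (3) are equivalent and (2) implies (1). Moreover, (1) does not imply (2) in general: there exist such $X$, $n$, $f$ with $f$ Touhey but $F_n(f)$ not Touhey.
   Context: A compactum is a nondegenerate compact, perfect, Hausdorff topological space. $F_n(X)$ is the set of nonempty subsets of $X$ with at most $n$ points, with the Vietoris topology; $F_1(X)=\{\{x\}:x\in X\}$; $F_n(f)(A)=f(A)$. $SF_n(X)=F_n(X)/F_1(X)$ is the quotient collapsing $F_1(X)$ to a point, $q$ the quotient map, $F_X=q(F_1(X))$, and $SF_n(f)(\chi)=q(F_n(f)(q^{-1}(\chi)))$ for $\chi\neq F_X$, $SF_n(f)(F_X)=F_X$. A function $g:Z\to Z$ is Touhey if for every pair of nonempty open $U,V\subseteq Z$ there exist a periodic point $z\in U$ (i.e. $g^m(z)=z$ for some $m\in\mathbb{N}$) and $k\in\mathbb{Z}_+$ with $g^k(z)\in V$. *)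

theory Defs
  imports "HOL-Analysis.Analysis"
begin

definition compactum :: "'a topology \<Rightarrow> bool" where
  "compactum X \<longleftrightarrow>
     (\<exists>x\<in>topspace X. \<exists>y\<in>topspace X. x \<noteq> y) \<and>
     compact_space X \<and>
     X derived_set_of (topspace X) = topspace X \<and>
     Hausdorff_space X"

definition quotient_topology :: "'a topology \<Rightarrow> ('a \<Rightarrow> 'b) \<Rightarrow> 'b topology" where
  "quotient_topology T q =
     topology (\<lambda>U. U \<subseteq> q ` topspace T \<and> openin T {x \<in> topspace T. q x \<in> U})"

lemma istopology_quotient:
  "istopology (\<lambda>U. U \<subseteq> q ` topspace T \<and> openin T {x \<in> topspace T. q x \<in> U})"
proof -
  have 1: "{x \<in> topspace T. q x \<in> S \<and> q x \<in> R} = {x \<in> topspace T. q x \<in> S} \<inter> {x \<in> topspace T. q x \<in> R}" for S R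
    by blast
  have 2: "{x \<in> topspace T. \<exists>X\<in>K. q x \<in> X} = (\<Union>U\<in>K. {x \<in> topspace T. q x \<in> U})" for K
    by blast
  show ?thesis unfolding istopology_def
    by (auto simp: 1 2 intro!: openin_Union)
qed

lemma openin_quotient_topology:
  "openin (quotient_topology T q) U \<longleftrightarrow>
     U \<subseteq> q ` topspace T \<and> openin T {x \<in> topspace T. q x \<in> U}"
  unfolding quotient_topology_def using istopology_quotient[of q T] by simp

definition vietoris :: "'a topology \<Rightarrow> 'a set topology" where
  "vietoris X = topology_generated_by
     ({{A. A \<subseteq> U} | U. openin X U} \<union>
      {{A. A \<subseteq> topspace X \<and> A \<inter> U \<noteq> {}} | U. openin X U})"

definition fin_subsets :: "nat \<Rightarrow> 'a topology \<Rightarrow> 'a set set" where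
  "fin_subsets n X = {A. A \<subseteq> topspace X \<and> A \<noteq> {} \<and> finite A \<and> card A \<le> n}"

definition Fn_top :: "nat \<Rightarrow> 'a topology \<Rightarrow> 'a set topology" where
  "Fn_top n X = subtopology (vietoris X) (fin_subsets n X)"

definition Fn_map :: "('a \<Rightarrow> 'a) \<Rightarrow> 'a set \<Rightarrow> 'a set" where
  "Fn_map f A = f ` A"

text \<open>Quotient map F_n(X) -> SF_n(X) = F_n(X)/F_1(X). The collapsed point F_X is
  represented by the empty set (which is not an element of F_n(X)); every other
  point is represented by itself.\<close>
definition SF_quot :: "'a topology \<Rightarrow> 'a set \<Rightarrow> 'a set" where
  "SF_quot X A = (if A \<in> fin_subsets 1 X then {} else A)"

definition SF_top :: "nat \<Rightarrow> 'a topology \<Rightarrow> 'a set topology" where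
  "SF_top n X = quotient_topology (Fn_top n X) (SF_quot X)"

text \<open>SF_n(f)(chi) = q(F_n(f)(q^{-1}(chi))) for chi \<noteq> F_X, and SF_n(f)(F_X) = F_X.\<close>
definition SF_map :: "'a topology \<Rightarrow> ('a \<Rightarrow> 'a) \<Rightarrow> 'a set \<Rightarrow> 'a set" where
  "SF_map X f C = (if C = {} then {} else SF_quot X (Fn_map f C))"

definition touhey :: "'b topology \<Rightarrow> ('b \<Rightarrow> 'b) \<Rightarrow> bool" where
  "touhey Z g \<longleftrightarrow>
     (\<forall>U V. openin Z U \<longrightarrow> openin Z V \<longrightarrow> U \<noteq> {} \<longrightarrow> V \<noteq> {} \<longrightarrow>
        (\<exists>z\<in>U. (\<exists>m::nat. m \<ge> 1 \<and> (g ^^ m) z = z) \<and> (\<exists>k::nat. (g ^^ k) z \<in> V)))"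

end

theory Submission
  imports Defs
begin

(* The collapsed set F_1(X) is forward invariant under F_n(f), and because X is Hausdorff
   without isolated points every nonempty open set of F_n(X) contains a nonempty open set of
   non-singletons; these sets are open in SF_n(X) too, so both Touhey properties only need to be
   tested on them. A periodic orbit of F_n(f) starting off F_1(X) never enters it, and a periodic
   orbit of SF_n(f) never reaches the fixed collapsed point, so on such sets the periodic orbits of
   F_n(f) and SF_n(f) are the same. If A is F_n(f)-periodic of period m, then f^m permutes the
   finite set A, so every point of A is f-periodic; starting from the open set of subsets of U
   this gives (2) => (1).
   For the counterexample, the rotation g moving each odd dyadic r/2^N of (0, 1) to
   frac (r/2^N + 2/2^N) permutes the level-N points cyclically and is Touhey on [0, 1]. On
   [0, 1] u [2, 3] the map t |-> t + 2, t + 2 |-> g t is then Touhey, but it alternates between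
   the two intervals, so F_2 of it never moves a set inside [0, 1] to one meeting both. *)

lemma topspace_vietoris: "topspace (vietoris X) = {A. A \<subseteq> topspace X}"
  unfolding vietoris_def topology_generated_by_topspace by (auto dest: openin_subset)

lemma topspace_Fn_top: "topspace (Fn_top n X) = fin_subsets n X"
  unfolding Fn_top_def by (auto simp: topspace_vietoris fin_subsets_def)

lemma fin_subsets_1: "A \<in> fin_subsets 1 X \<longleftrightarrow> (\<exists>x\<in>topspace X. A = {x})"
  unfolding fin_subsets_def by (auto simp: card_le_Suc0_iff_eq; blast)

lemma openin_Fn_top_subsets:
  assumes "openin X U"
  shows "openin (Fn_top n X) {A \<in> fin_subsets n X. A \<subseteq> U}"
proof -
  have "{A \<in> fin_subsets n X. A \<subseteq> U} = fin_subsets n X \<inter> {A. A \<subseteq> U}"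
    by blast
  then show ?thesis
    unfolding Fn_top_def vietoris_def
    using assms by (auto intro!: openin_subtopology_Int2 topology_generated_by_Basis)
qed

lemma openin_Fn_top_meets:
  assumes "openin X U"
  shows "openin (Fn_top n X) {A \<in> fin_subsets n X. A \<inter> U \<noteq> {}}"
proof -
  have "{A \<in> fin_subsets n X. A \<inter> U \<noteq> {}} =
      fin_subsets n X \<inter> {A. A \<subseteq> topspace X \<and> A \<inter> U \<noteq> {}}"
    by (auto simp: fin_subsets_def)
  then show ?thesis
    unfolding Fn_top_def vietoris_def
    using assms by (auto intro!: openin_subtopology_Int2 topology_generated_by_Basis)
qed

lemma continuous_map_insert_vietoris:
  assumes "x \<in> topspace X"
  shows "continuous_map X (vietoris X) (\<lambda>y. {x, y})"
  unfolding vietoris_def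
proof (rule continuous_on_generated_topo)
  fix S
  assume "S \<in> {{A. A \<subseteq> U} | U. openin X U} \<union>
      {{A. A \<subseteq> topspace X \<and> A \<inter> U \<noteq> {}} | U. openin X U}"
  then obtain U where U: "openin X U"
    and S: "S = {A. A \<subseteq> U} \<or> S = {A. A \<subseteq> topspace X \<and> A \<inter> U \<noteq> {}}"
    by blast
  have "U \<subseteq> topspace X"
    using U by (rule openin_subset)
  with S assms have "(\<lambda>y. {x, y}) -` S \<inter> topspace X \<in> {{}, U, topspace X}"
    by auto
  with U show "openin X ((\<lambda>y. {x, y}) -` S \<inter> topspace X)"
    by auto
next
  show "(\<lambda>y. {x, y}) ` topspace X \<subseteq> \<Union> ({{A. A \<subseteq> U} | U. openin X U} \<union>
      {{A. A \<subseteq> topspace X \<and> A \<inter> U \<noteq> {}} | U. openin X U})"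
    using assms by blast
qed

lemma continuous_map_insert_Fn_top:
  assumes "x \<in> topspace X" "n \<ge> 2"
  shows "continuous_map X (Fn_top n X) (\<lambda>y. {x, y})"
proof -
  have "card {x, y} \<le> n" for y
    using assms(2) by (cases "x = y") auto
  then show ?thesis
    unfolding Fn_top_def continuous_map_in_subtopology
    using continuous_map_insert_vietoris[OF assms(1)] assms(1)
    by (auto simp: fin_subsets_def)
qed

lemma openin_Fn_top_contains_non_singleton:
  assumes "X derived_set_of topspace X = topspace X" "n \<ge> 2"
    and "openin (Fn_top n X) U" "U \<noteq> {}"
  obtains B a b where "B \<in> U" "a \<in> B" "b \<in> B" "a \<noteq> b"
proof -
  obtain A where A: "A \<in> U"
    using assms(4) by blast
  have AF: "A \<in> fin_subsets n X"
    using openin_subset[OF assms(3)] A by (auto simp: topspace_Fn_top)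
  show thesis
  proof (cases "A \<in> fin_subsets 1 X")
    case False
    with AF have "\<exists>a\<in>A. \<exists>b\<in>A. a \<noteq> b"
      by (auto simp: fin_subsets_def card_le_Suc0_iff_eq)
    with A that show ?thesis
      by blast
  next
    case True
    then obtain x where x: "x \<in> topspace X" "A = {x}"
      using fin_subsets_1[of A X] by auto
    \<comment> \<open>the pairs {x, y} with y near x lie in U, and x is not isolated\<close>
    let ?T = "{y \<in> topspace X. {x, y} \<in> U}"
    have "x \<in> X derived_set_of topspace X"
      using assms(1) x(1) by simp
    then have "\<not> openin X {x}"
      by (simp add: derived_set_of_topspace)
    moreover have "openin X ?T"
      using continuous_map_insert_Fn_top[OF x(1) assms(2)] assms(3)
      by (rule openin_continuous_map_preimage)
    ultimately have "?T \<noteq> {x}"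
      by metis
    moreover have "x \<in> ?T"
      using A x by simp
    ultimately obtain y where "y \<noteq> x" "{x, y} \<in> U"
      by blast
    with that show ?thesis
      by blast
  qed
qed

definition opens_avoiding_singletons :: "nat \<Rightarrow> 'a topology \<Rightarrow> 'a set set set" where
  "opens_avoiding_singletons n X =
     {W. openin (Fn_top n X) W \<and> W \<noteq> {} \<and> W \<inter> fin_subsets 1 X = {}}"

lemma Fn_top_opens_avoiding_singletons:
  assumes "Hausdorff_space X" "X derived_set_of topspace X = topspace X" "n \<ge> 2"
    and "openin (Fn_top n X) U" "U \<noteq> {}"
  shows "\<exists>W\<in>opens_avoiding_singletons n X. W \<subseteq> U"
proof -
  obtain B a b where B: "B \<in> U" "a \<in> B" "b \<in> B" "a \<noteq> b"
    using openin_Fn_top_contains_non_singleton[OF assms(2-5)] by blast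
  have BF: "B \<in> fin_subsets n X"
    using B(1) openin_subset[OF assms(4)] by (auto simp: topspace_Fn_top)
  then have "a \<in> topspace X" "b \<in> topspace X"
    using B(2,3) by (auto simp: fin_subsets_def)
  then obtain P Q where PQ: "openin X P" "openin X Q" "a \<in> P" "b \<in> Q" "disjnt P Q"
    using assms(1) B(4) unfolding Hausdorff_space_def by blast
  define W where
    "W = U \<inter> {A \<in> fin_subsets n X. A \<inter> P \<noteq> {}} \<inter> {A \<in> fin_subsets n X. A \<inter> Q \<noteq> {}}"
  have "openin (Fn_top n X) W"
    unfolding W_def using assms(4) PQ(1,2) by (intro openin_Int openin_Fn_top_meets)
  moreover have "B \<in> W"
    using B BF PQ(3,4) unfolding W_def by blast
  moreover have "W \<inter> fin_subsets 1 X = {}"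
  proof -
    have "\<not> (C \<inter> P \<noteq> {} \<and> C \<inter> Q \<noteq> {})" if "C \<in> fin_subsets 1 X" for C
      using that PQ(5) unfolding fin_subsets_1 disjnt_def by blast
    then show ?thesis
      unfolding W_def by blast
  qed
  moreover have "W \<subseteq> U"
    unfolding W_def by blast
  ultimately show ?thesis
    unfolding opens_avoiding_singletons_def by blast
qed

lemma openin_SF_top_preimage:
  assumes "openin (SF_top n X) U"
  shows "openin (Fn_top n X) {A \<in> fin_subsets n X. SF_quot X A \<in> U}"
  using assms by (simp add: SF_top_def openin_quotient_topology topspace_Fn_top)

lemma openin_SF_top_if_avoids_singletons:
  assumes "openin (Fn_top n X) W" "W \<inter> fin_subsets 1 X = {}"
  shows "openin (SF_top n X) W"
proof -
  have WF: "W \<subseteq> fin_subsets n X"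
    using openin_subset[OF assms(1)] by (simp add: topspace_Fn_top)
  then have "{} \<notin> W"
    by (auto simp: fin_subsets_def)
  with WF assms(2) have "{A \<in> fin_subsets n X. SF_quot X A \<in> W} = W"
    by (auto simp: SF_quot_def split: if_splits)
  moreover have "W \<subseteq> SF_quot X ` fin_subsets n X"
    using WF assms(2) by (force simp: SF_quot_def)
  ultimately show ?thesis
    using assms(1) by (simp add: SF_top_def openin_quotient_topology topspace_Fn_top)
qed

lemma SF_top_opens_avoiding_singletons:
  assumes "Hausdorff_space X" "X derived_set_of topspace X = topspace X" "n \<ge> 2"
    and "openin (SF_top n X) U" "U \<noteq> {}"
  shows "\<exists>W\<in>opens_avoiding_singletons n X. W \<subseteq> U"
proof -
  let ?U0 = "{A \<in> fin_subsets n X. SF_quot X A \<in> U}"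
  have "U \<subseteq> SF_quot X ` fin_subsets n X"
    using assms(4) by (simp add: SF_top_def openin_quotient_topology topspace_Fn_top)
  with assms(5) have "?U0 \<noteq> {}"
    by blast
  then obtain W where W: "W \<in> opens_avoiding_singletons n X" "W \<subseteq> ?U0"
    using Fn_top_opens_avoiding_singletons[OF assms(1-3) openin_SF_top_preimage[OF assms(4)]]
    by blast
  have "SF_quot X A = A" if "A \<in> W" for A
    using that W(1) by (auto simp: opens_avoiding_singletons_def SF_quot_def)
  with W have "W \<subseteq> U"
    by auto
  with W show ?thesis
    by blast
qed

lemma touhey_iff_on_base:
  assumes "\<And>W. W \<in> \<B> \<Longrightarrow> openin Z W \<and> W \<noteq> {}"
    and "\<And>U. openin Z U \<Longrightarrow> U \<noteq> {} \<Longrightarrow> \<exists>W\<in>\<B>. W \<subseteq> U"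
  shows "touhey Z g \<longleftrightarrow>
    (\<forall>U\<in>\<B>. \<forall>V\<in>\<B>. \<exists>z\<in>U. (\<exists>m\<ge>1. (g ^^ m) z = z) \<and> (\<exists>k. (g ^^ k) z \<in> V))"
proof
  assume "touhey Z g"
  then show "\<forall>U\<in>\<B>. \<forall>V\<in>\<B>. \<exists>z\<in>U. (\<exists>m\<ge>1. (g ^^ m) z = z) \<and> (\<exists>k. (g ^^ k) z \<in> V)"
    using assms(1) unfolding touhey_def by blast
next
  assume base: "\<forall>U\<in>\<B>. \<forall>V\<in>\<B>. \<exists>z\<in>U. (\<exists>m\<ge>1. (g ^^ m) z = z) \<and> (\<exists>k. (g ^^ k) z \<in> V)"
  show "touhey Z g"
    unfolding touhey_def
  proof (intro allI impI)
    fix U V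
    assume "openin Z U" "openin Z V" "U \<noteq> {}" "V \<noteq> {}"
    then obtain U' V' where "U' \<in> \<B>" "V' \<in> \<B>" "U' \<subseteq> U" "V' \<subseteq> V"
      using assms(2) by meson
    with base show "\<exists>z\<in>U. (\<exists>m\<ge>1. (g ^^ m) z = z) \<and> (\<exists>k. (g ^^ k) z \<in> V)"
      by blast
  qed
qed

lemma Fn_map_funpow: "(Fn_map f ^^ k) A = (f ^^ k) ` A"
  by (induction k) (auto simp: Fn_map_def image_comp)

lemma Fn_map_fin_subsets:
  assumes "f ` topspace X \<subseteq> topspace X" "A \<in> fin_subsets n X"
  shows "Fn_map f A \<in> fin_subsets n X"
  using assms card_image_le[of A f] unfolding fin_subsets_def Fn_map_def by auto

lemma SF_map_funpow:
  assumes "A \<noteq> {}" "A \<notin> fin_subsets 1 X"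
  shows "(SF_map X f ^^ j) A =
    (if \<exists>i\<le>j. (Fn_map f ^^ i) A \<in> fin_subsets 1 X then {} else (Fn_map f ^^ j) A)"
proof (induction j)
  case 0
  then show ?case
    using assms(2) by simp
next
  case (Suc j)
  have "(Fn_map f ^^ j) A \<noteq> {}"
    using assms(1) by (simp add: Fn_map_funpow)
  with Suc show ?case
    by (auto simp: SF_map_def SF_quot_def le_Suc_eq)
qed

lemma funpow_periodic_avoids_invariant:
  assumes inv: "\<And>x. P x \<Longrightarrow> P (g x)"
    and "(g ^^ m) z = z" "m \<ge> 1" "\<not> P z"
  shows "\<not> P ((g ^^ j) z)"
proof
  assume "P ((g ^^ j) z)"
  then have "P ((g ^^ (i + j)) z)" for i
    by (induction i) (simp_all add: inv)
  moreover have "m * j - j + j = m * j"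
    using assms(3) by simp
  ultimately have "P ((g ^^ (m * j)) z)"
    by metis
  moreover have "((g ^^ m) ^^ i) z = z" for i
    using assms(2) by (induction i) simp_all
  ultimately show False
    using assms(4) by (simp add: funpow_mult)
qed

lemma Fn_map_funpow_avoids_singletons:
  assumes "f ` topspace X \<subseteq> topspace X" "A \<notin> fin_subsets 1 X"
    and "(Fn_map f ^^ m) A = A" "m \<ge> 1"
  shows "(Fn_map f ^^ i) A \<notin> fin_subsets 1 X"
  using funpow_periodic_avoids_invariant[of "\<lambda>B. B \<in> fin_subsets 1 X"]
    Fn_map_fin_subsets[OF assms(1)] assms(2-4) by blast

lemma SF_map_funpow_avoids_singletons:
  assumes "A \<noteq> {}" "A \<notin> fin_subsets 1 X"
    and "(SF_map X f ^^ m) A = A" "m \<ge> 1"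
  shows "(Fn_map f ^^ i) A \<notin> fin_subsets 1 X"
proof -
  \<comment> \<open>SF_n(f) fixes the collapsed point, so a periodic orbit through A never reaches it\<close>
  have "(SF_map X f ^^ i) A \<noteq> {}"
    using funpow_periodic_avoids_invariant[of "\<lambda>B. B = {}" "SF_map X f"] assms
    by (auto simp: SF_map_def)
  then show ?thesis
    using SF_map_funpow[OF assms(1,2), where f = f and j = i] by (auto split: if_splits)
qed

lemma Fn_periodic_orbit_iff_SF_periodic_orbit:
  assumes "f ` topspace X \<subseteq> topspace X" "A \<in> fin_subsets n X" "A \<notin> fin_subsets 1 X"
  shows "(\<exists>m\<ge>1. (Fn_map f ^^ m) A = A) \<and> (\<exists>k. (Fn_map f ^^ k) A \<in> V) \<longleftrightarrow>
    (\<exists>m\<ge>1. (SF_map X f ^^ m) A = A) \<and> (\<exists>k. (SF_map X f ^^ k) A \<in> V)"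
proof (cases "(\<exists>m\<ge>1. (Fn_map f ^^ m) A = A) \<or> (\<exists>m\<ge>1. (SF_map X f ^^ m) A = A)")
  case True
  have "A \<noteq> {}"
    using assms(2) by (auto simp: fin_subsets_def)
  from True have "(Fn_map f ^^ i) A \<notin> fin_subsets 1 X" for i
    using Fn_map_funpow_avoids_singletons[OF assms(1,3)]
      SF_map_funpow_avoids_singletons[OF \<open>A \<noteq> {}\<close> assms(3)] by blast
  then have "(SF_map X f ^^ j) A = (Fn_map f ^^ j) A" for j
    using SF_map_funpow[OF \<open>A \<noteq> {}\<close> assms(3)] by simp
  then show ?thesis
    by simp
next
  case False
  then show ?thesis
    by blast
qed

theorem touhey_Fn_top_iff_touhey_SF_top:
  assumes "Hausdorff_space X" "X derived_set_of topspace X = topspace X" "n \<ge> 2"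
    and "f ` topspace X \<subseteq> topspace X"
  shows "touhey (Fn_top n X) (Fn_map f) \<longleftrightarrow> touhey (SF_top n X) (SF_map X f)"
proof -
  let ?B = "opens_avoiding_singletons n X"
  let ?touhey_on_B =
    "\<lambda>g. \<forall>U\<in>?B. \<forall>V\<in>?B. \<exists>A\<in>U. (\<exists>m\<ge>1. (g ^^ m) A = A) \<and> (\<exists>k. (g ^^ k) A \<in> V)"
  have Fn_base: "openin (Fn_top n X) W \<and> W \<noteq> {}" if "W \<in> ?B" for W
    using that by (simp add: opens_avoiding_singletons_def)
  have SF_base: "openin (SF_top n X) W \<and> W \<noteq> {}" if "W \<in> ?B" for W
    using that openin_SF_top_if_avoids_singletons unfolding opens_avoiding_singletons_def by blast
  have orbits: "(\<exists>m\<ge>1. (Fn_map f ^^ m) A = A) \<and> (\<exists>k. (Fn_map f ^^ k) A \<in> V) \<longleftrightarrow>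
      (\<exists>m\<ge>1. (SF_map X f ^^ m) A = A) \<and> (\<exists>k. (SF_map X f ^^ k) A \<in> V)"
    if "A \<in> U" "U \<in> ?B" for A U V
  proof (rule Fn_periodic_orbit_iff_SF_periodic_orbit[OF assms(4)])
    show "A \<in> fin_subsets n X"
      using that Fn_base openin_subset[of "Fn_top n X" U] by (auto simp: topspace_Fn_top)
    show "A \<notin> fin_subsets 1 X"
      using that unfolding opens_avoiding_singletons_def by blast
  qed
  have "touhey (Fn_top n X) (Fn_map f) \<longleftrightarrow> ?touhey_on_B (Fn_map f)"
    by (rule touhey_iff_on_base[OF Fn_base Fn_top_opens_avoiding_singletons[OF assms(1-3)]])
  also have "\<dots> \<longleftrightarrow> ?touhey_on_B (SF_map X f)"
    by (intro ball_cong bex_cong refl orbits)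
  also have "\<dots> \<longleftrightarrow> touhey (SF_top n X) (SF_map X f)"
    using touhey_iff_on_base[OF SF_base SF_top_opens_avoiding_singletons[OF assms(1-3)]]
    by (rule sym)
  finally show ?thesis .
qed

lemma periodic_if_finite_image_eq:
  assumes "finite A" "h ` A = A" "z \<in> A"
  obtains p where "p > 0" "(h ^^ p) z = z"
proof -
  define \<pi> where "\<pi> x = (if x \<in> A then h x else x)" for x
  have "bij_betw h A A"
    using assms(1,2) by (simp add: bij_betw_def eq_card_imp_inj_on)
  then have "bij_betw \<pi> A A"
    by (subst bij_betw_cong[where g = h]) (simp_all add: \<pi>_def)
  then have "permutation \<pi>"
    using assms(1) by (auto simp: permutation_permutes permutes_altdef \<pi>_def)
  then obtain p where p: "p > 0" "(\<pi> ^^ p) z = z"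
    by (rule permutation_self)
  have orbit: "(h ^^ i) z \<in> A" for i
    using assms(2,3) by (induction i) auto
  have "(\<pi> ^^ i) z = (h ^^ i) z" for i
    using orbit by (induction i) (simp_all add: \<pi>_def)
  with p that show thesis
    by simp
qed

lemma touhey_if_touhey_Fn_top:
  assumes "touhey (Fn_top n X) (Fn_map f)" "n \<ge> 1"
  shows "touhey X f"
  unfolding touhey_def
proof (intro allI impI)
  fix U V
  assume U: "openin X U" and V: "openin X V" and "U \<noteq> {}" "V \<noteq> {}"
  have subsets_ne: "{A \<in> fin_subsets n X. A \<subseteq> W} \<noteq> {}"
    if W: "openin X W" "W \<noteq> {}" for W
  proof -
    obtain x where "x \<in> W"
      using W(2) by blast
    then have "{x} \<in> {A \<in> fin_subsets n X. A \<subseteq> W}"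
      using openin_subset[OF W(1)] assms(2) by (auto simp: fin_subsets_def)
    then show ?thesis
      by blast
  qed
  obtain A m k where A: "A \<in> fin_subsets n X" "A \<subseteq> U"
    and m: "m \<ge> 1" "(Fn_map f ^^ m) A = A" and k: "(Fn_map f ^^ k) A \<subseteq> V"
    using assms(1)[unfolded touhey_def, rule_format, OF openin_Fn_top_subsets[OF U]
        openin_Fn_top_subsets[OF V] subsets_ne[OF U \<open>U \<noteq> {}\<close>] subsets_ne[OF V \<open>V \<noteq> {}\<close>]]
    by blast
  obtain z where z: "z \<in> A"
    using A(1) by (auto simp: fin_subsets_def)
  obtain p where p: "p > 0" "((f ^^ m) ^^ p) z = z"
    using periodic_if_finite_image_eq[of A "f ^^ m" z] A(1) m(2) z
    by (auto simp: Fn_map_funpow fin_subsets_def)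
  show "\<exists>z\<in>U. (\<exists>m\<ge>1. (f ^^ m) z = z) \<and> (\<exists>k. (f ^^ k) z \<in> V)"
  proof (intro bexI conjI exI)
    show "z \<in> U"
      using A(2) z by blast
    show "1 \<le> m * p" "(f ^^ (m * p)) z = z"
      using m(1) p by (simp_all add: funpow_mult)
    show "(f ^^ k) z \<in> V"
      using k z by (auto simp: Fn_map_funpow)
  qed
qed

definition odd_dyadic :: "nat \<Rightarrow> real \<Rightarrow> bool" where
  "odd_dyadic N x \<longleftrightarrow> (\<exists>r::int. odd r \<and> 0 < r \<and> r < 2 ^ N \<and> x = of_int r / 2 ^ N)"

definition dyadic_rotation :: "real \<Rightarrow> real" where
  "dyadic_rotation x =
     (if \<exists>N. odd_dyadic N x then frac (x + 2 / 2 ^ (THE N. odd_dyadic N x)) else x)"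

lemma odd_dyadic_level_unique:
  assumes "odd_dyadic N x" "odd_dyadic M x"
  shows "N = M"
proof -
  have "\<not> (odd_dyadic N x \<and> odd_dyadic M x)" if "N < M" for N M
  proof
    assume "odd_dyadic N x \<and> odd_dyadic M x"
    then obtain r s :: int where r: "odd r" "x = of_int r / 2 ^ N"
      and s: "odd s" "x = of_int s / 2 ^ M"
      unfolding odd_dyadic_def by blast
    have "(2::real) ^ M = 2 ^ N * 2 ^ (M - N)"
      using that by (simp flip: power_add)
    with r(2) s(2) have "real_of_int s = real_of_int (r * 2 ^ (M - N))"
      by (simp add: field_simps)
    then have "s = r * 2 ^ (M - N)"
      by (simp only: of_int_eq_iff)
    with s(1) that show False
      by simp
  qed
  with assms show ?thesis
    by (metis linorder_neqE_nat)
qed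

lemma frac_of_int_divide:
  assumes "(b::int) > 0"
  shows "frac (of_int a / of_int b :: real) = of_int (a mod b) / of_int b"
proof -
  have "real_of_int (a mod b) = of_int a - of_int b * of_int (a div b)"
    by (simp add: minus_div_mult_eq_mod[symmetric])
  with assms show ?thesis
    by (simp add: frac_def floor_divide_of_int_eq field_simps)
qed

lemma dyadic_rotation_of_odd:
  assumes "odd r" "0 < r" "r < 2 ^ N"
  shows "dyadic_rotation (of_int r / 2 ^ N) = of_int ((r + 2) mod 2 ^ N) / 2 ^ N"
proof -
  have level: "odd_dyadic N (of_int r / 2 ^ N)"
    using assms unfolding odd_dyadic_def by blast
  then have "(THE M. odd_dyadic M (of_int r / 2 ^ N)) = N"
    using odd_dyadic_level_unique by blast
  with level have "dyadic_rotation (of_int r / 2 ^ N) = frac (of_int (r + 2) / of_int (2 ^ N))"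
    unfolding dyadic_rotation_def by (auto simp: add_divide_distrib)
  also have "\<dots> = of_int ((r + 2) mod 2 ^ N) / 2 ^ N"
    by (subst frac_of_int_divide) simp_all
  finally show ?thesis .
qed

lemma odd_mod_power2:
  assumes "odd (a::int)" "N \<noteq> 0"
  shows "odd (a mod 2 ^ N)" "0 < a mod 2 ^ N" "a mod 2 ^ N < 2 ^ N"
proof -
  have "(2::int) dvd 2 ^ N"
    using assms(2) by simp
  with assms(1) show odd: "odd (a mod 2 ^ N)"
    by (simp add: dvd_mod_iff)
  have "a mod 2 ^ N \<noteq> 0"
    using odd by auto
  moreover have "0 \<le> a mod 2 ^ N"
    by (rule pos_mod_sign) simp
  ultimately show "0 < a mod 2 ^ N"
    by linarith
  show "a mod 2 ^ N < 2 ^ N"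
    by simp
qed

lemma dyadic_rotation_funpow:
  assumes "odd r" "0 < r" "r < 2 ^ N"
  shows "(dyadic_rotation ^^ k) (of_int r / 2 ^ N) = of_int ((r + 2 * int k) mod 2 ^ N) / 2 ^ N"
proof (induction k)
  case 0
  then show ?case
    using assms by simp
next
  case (Suc k)
  have "N \<noteq> 0"
    using assms(2,3) by (cases N) simp_all
  then have "odd ((r + 2 * int k) mod 2 ^ N)" "0 < (r + 2 * int k) mod 2 ^ N"
    "(r + 2 * int k) mod 2 ^ N < 2 ^ N"
    using odd_mod_power2[of "r + 2 * int k" N] assms(1) by simp_all
  from dyadic_rotation_of_odd[OF this] Suc show ?case
    by (simp add: mod_simps ac_simps)
qed

lemma dyadic_rotation_periodic:
  assumes "odd r" "0 < r" "r < 2 ^ N"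
  shows "(dyadic_rotation ^^ 2 ^ N) (of_int r / 2 ^ N) = of_int r / 2 ^ N"
  using dyadic_rotation_funpow[OF assms, of "2 ^ N"] assms by simp

lemma dyadic_rotation_reaches:
  assumes "odd r" "0 < r" "r < 2 ^ N" "odd s" "0 < s" "s < 2 ^ N"
  obtains k where "(dyadic_rotation ^^ k) (of_int r / 2 ^ N) = of_int s / 2 ^ N"
proof -
  define k where "k = nat (((s - r) div 2) mod 2 ^ N)"
  have "(r + 2 * int k) mod 2 ^ N = (r + 2 * ((s - r) div 2)) mod 2 ^ N"
    unfolding k_def by (simp, metis mod_add_right_eq mod_mult_right_eq)
  also have "\<dots> = s"
    using assms by simp
  finally show thesis
    using that[of k] dyadic_rotation_funpow[OF assms(1-3), of k] by simp
qed

lemma dyadic_rotation_range: "x \<in> {0..1} \<Longrightarrow> dyadic_rotation x \<in> {0..1}"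
  unfolding dyadic_rotation_def using frac_ge_0 frac_lt_1 by (auto intro: less_imp_le)

lemma dyadic_rotation_funpow_range: "x \<in> {0..1} \<Longrightarrow> (dyadic_rotation ^^ k) x \<in> {0..1}"
  by (induction k) (auto simp: dyadic_rotation_range simp del: atLeastAtMost_iff)

lemma odd_dyadic_between:
  fixes a b :: real
  assumes "0 \<le> a" "b \<le> 1" "3 < 2 ^ N * (b - a)"
  obtains r :: int where "odd r" "0 < r" "r < 2 ^ N" "a < of_int r / 2 ^ N" "of_int r / 2 ^ N < b"
proof -
  define s where "s = \<lfloor>a * 2 ^ N / 2\<rfloor>"
  have s: "of_int s \<le> a * 2 ^ N / 2" "a * 2 ^ N / 2 < of_int s + 1" "s \<ge> 0"
    unfolding s_def using assms(1) by (linarith, linarith, simp)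
  \<comment> \<open>the odd numerator 2s + 3 exceeds a 2^N by at most 3, less than the length of (a 2^N, b 2^N)\<close>
  have lower: "a * 2 ^ N < of_int (2 * s + 3)" and upper: "of_int (2 * s + 3) < b * 2 ^ N"
    using s assms(3) by (simp_all add: algebra_simps)
  have "b * 2 ^ N \<le> 1 * (2::real) ^ N"
    using assms(2) by (intro mult_right_mono) simp_all
  with upper have "real_of_int (2 * s + 3) < 2 ^ N"
    by linarith
  then have "2 * s + 3 < 2 ^ N"
    by (metis of_int_less_iff of_int_numeral of_int_power)
  moreover have "a < of_int (2 * s + 3) / 2 ^ N" "of_int (2 * s + 3) / 2 ^ N < b"
    using lower upper by (simp_all add: pos_less_divide_eq pos_divide_less_eq)
  ultimately show thesis
    using that[of "2 * s + 3"] s(3) by simp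
qed

lemma openin_unit_interval_contains_interval:
  assumes "openin (top_of_set {0..1}) U" "U \<noteq> {}"
  obtains a b :: real where "0 \<le> a" "a < b" "b \<le> 1" "{a<..<b} \<subseteq> U"
proof -
  obtain u where "u \<in> U"
    using assms(2) by blast
  with assms(1) obtain e where e: "e > 0" "\<And>x. x \<in> {0..1} \<Longrightarrow> dist x u < e \<Longrightarrow> x \<in> U"
    and "u \<in> {0..1}"
    unfolding openin_euclidean_subtopology_iff by blast
  then show thesis
    using that[of "max 0 (u - e)" "min 1 (u + e)"] by (force simp: dist_real_def)
qed

lemma dyadic_rotation_touhey: "touhey (top_of_set {0..1}) dyadic_rotation"
  unfolding touhey_def
proof (intro allI impI)
  fix U V :: "real set"
  assume "openin (top_of_set {0..1}) U" "openin (top_of_set {0..1}) V" "U \<noteq> {}" "V \<noteq> {}"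
  then obtain a b a' b' where ab: "0 \<le> a" "a < b" "b \<le> 1" "{a<..<b} \<subseteq> U"
    and ab': "0 \<le> a'" "a' < b'" "b' \<le> 1" "{a'<..<b'} \<subseteq> V"
    by (metis openin_unit_interval_contains_interval)
  obtain N where N: "3 / (b - a) + 3 / (b' - a') < (2::real) ^ N"
    using real_arch_pow[of 2] by auto
  have "3 / (b - a) < 2 ^ N" "3 / (b' - a') < 2 ^ N"
    using N ab(2) ab'(2) by (smt (verit) divide_pos_pos)+
  then have "3 < 2 ^ N * (b - a)" "3 < 2 ^ N * (b' - a')"
    using ab(2) ab'(2) by (simp_all add: divide_less_eq)
  then obtain r s where r: "odd r" "0 < r" "r < 2 ^ N" "of_int r / 2 ^ N \<in> {a<..<b}"
    and s: "odd s" "0 < s" "s < 2 ^ N" "of_int s / 2 ^ N \<in> {a'<..<b'}"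
    using odd_dyadic_between ab ab' by (metis greaterThanLessThan_iff)
  obtain k where "(dyadic_rotation ^^ k) (of_int r / 2 ^ N) = of_int s / 2 ^ N"
    using dyadic_rotation_reaches[OF r(1-3) s(1-3)] .
  then show "\<exists>z\<in>U. (\<exists>m\<ge>1. (dyadic_rotation ^^ m) z = z) \<and> (\<exists>k. (dyadic_rotation ^^ k) z \<in> V)"
    using dyadic_rotation_periodic[OF r(1-3)] r(4) s(4) ab(4) ab'(4)
    by (intro bexI[of _ "of_int r / 2 ^ N"] conjI exI[of _ "2 ^ N"] exI[of _ k]) auto
qed

definition two_intervals :: "real set" where
  "two_intervals = {0..1} \<union> {2..3}"

definition swap_rotation :: "real \<Rightarrow> real" where
  "swap_rotation x = (if x \<le> 1 then x + 2 else dyadic_rotation (x - 2))"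

lemma swap_rotation_left: "t \<in> {0..1} \<Longrightarrow> swap_rotation t = t + 2"
  by (simp add: swap_rotation_def)

lemma swap_rotation_right: "t \<in> {0..1} \<Longrightarrow> swap_rotation (t + 2) = dyadic_rotation t"
  by (simp add: swap_rotation_def)

lemma swap_rotation_funpow_even:
  assumes "t \<in> {0..1}"
  shows "(swap_rotation ^^ (2 * k)) t = (dyadic_rotation ^^ k) t \<and>
    (swap_rotation ^^ (2 * k)) (t + 2) = (dyadic_rotation ^^ k) t + 2"
proof (induction k)
  case (Suc k)
  have "2 * Suc k = Suc (Suc (2 * k))"
    by simp
  moreover have "(dyadic_rotation ^^ k) t \<in> {0..1}"
    using dyadic_rotation_funpow_range[OF assms] .
  ultimately show ?case
    using Suc by (simp add: swap_rotation_left swap_rotation_right dyadic_rotation_range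
        del: atLeastAtMost_iff)
qed simp

lemma swap_rotation_funpow_odd:
  assumes "t \<in> {0..1}"
  shows "(swap_rotation ^^ Suc (2 * k)) t = (dyadic_rotation ^^ k) t + 2 \<and>
    (swap_rotation ^^ Suc (2 * k)) (t + 2) = (dyadic_rotation ^^ Suc k) t"
  using swap_rotation_funpow_even[OF assms, of k] dyadic_rotation_funpow_range[OF assms, of k]
  by (simp add: swap_rotation_left swap_rotation_right del: atLeastAtMost_iff)

lemma swap_rotation_funpow_parity:
  assumes "t \<in> {0..1}"
  shows "(swap_rotation ^^ k) t \<in> (if even k then {0..1} else {2..3})"
proof (cases "even k")
  case True
  then obtain j where "k = 2 * j"
    by blast
  then show ?thesis
    using swap_rotation_funpow_even[OF assms, of j] dyadic_rotation_funpow_range[OF assms, of j]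
    by simp
next
  case False
  then obtain j where "k = Suc (2 * j)"
    by (metis oddE Suc_eq_plus1)
  then show ?thesis
    using swap_rotation_funpow_odd[OF assms, of j] dyadic_rotation_funpow_range[OF assms, of j]
    by auto
qed

lemma swap_rotation_periodic_orbit:
  assumes "t \<in> {0..1}" "(dyadic_rotation ^^ p) t = t" "p \<ge> 1"
    and "s \<in> {t, t + 2}" "s' \<in> {(dyadic_rotation ^^ k) t, (dyadic_rotation ^^ k) t + 2}"
  shows "(swap_rotation ^^ (2 * p)) s = s" "\<exists>j. (swap_rotation ^^ j) s = s'"
proof -
  note even = swap_rotation_funpow_even[OF assms(1)] and odd = swap_rotation_funpow_odd[OF assms(1)]
  show "(swap_rotation ^^ (2 * p)) s = s"
    using assms(4) even[of p] assms(2) by auto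
  \<comment> \<open>from t + 2 the orbit first returns to the left copy one step late, so go once more round\<close>
  have "(dyadic_rotation ^^ Suc (k + p - 1)) t = (dyadic_rotation ^^ k) t"
    using assms(2,3) by (simp add: funpow_add)
  then have "(swap_rotation ^^ Suc (2 * (k + p - 1))) (t + 2) = (dyadic_rotation ^^ k) t"
    using odd[of "k + p - 1"] by simp
  then show "\<exists>j. (swap_rotation ^^ j) s = s'"
    using assms(4,5) even[of k] odd[of k] by blast
qed

lemma swap_rotation_maps: "swap_rotation ` two_intervals \<subseteq> two_intervals"
proof
  fix y
  assume "y \<in> swap_rotation ` two_intervals"
  then obtain x where x: "x \<in> two_intervals" "y = swap_rotation x"
    by blast
  then consider "x \<in> {0..1}" | "x - 2 \<in> {0..1}"
    by (auto simp: two_intervals_def)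
  then show "y \<in> two_intervals"
  proof cases
    case 1
    then show ?thesis
      using x(2) swap_rotation_left[of x] by (auto simp: two_intervals_def)
  next
    case 2
    then show ?thesis
      using x(2) swap_rotation_right[of "x - 2"] dyadic_rotation_range[of "x - 2"]
      by (simp add: two_intervals_def)
  qed
qed

lemma compactum_two_intervals: "compactum (top_of_set two_intervals)"
  unfolding compactum_def
proof (intro conjI)
  show "\<exists>x\<in>topspace (top_of_set two_intervals). \<exists>y\<in>topspace (top_of_set two_intervals). x \<noteq> y"
    by (rule bexI[of _ 0], rule bexI[of _ 2]) (auto simp: two_intervals_def)
  show "compact_space (top_of_set two_intervals)"
    by (intro compact_space_subtopology) (simp add: two_intervals_def compact_Un)
  show "Hausdorff_space (top_of_set two_intervals)"
    by (intro Hausdorff_space_subtopology Hausdorff_space_euclidean)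
  have "two_intervals \<subseteq> euclidean derived_set_of two_intervals"
  proof
    fix x
    assume "x \<in> two_intervals"
    then have "x islimpt two_intervals"
      by (simp add: two_intervals_def islimpt_Un)
    then show "x \<in> euclidean derived_set_of two_intervals"
      unfolding in_derived_set_of islimpt_def by auto
  qed
  then show "top_of_set two_intervals derived_set_of topspace (top_of_set two_intervals) =
      topspace (top_of_set two_intervals)"
    by (auto simp: derived_set_of_subtopology)
qed

lemma swap_rotation_touhey: "touhey (top_of_set two_intervals) swap_rotation"
  unfolding touhey_def
proof (intro allI impI)
  fix U V
  assume U: "openin (top_of_set two_intervals) U" and V: "openin (top_of_set two_intervals) V"
    and "U \<noteq> {}" "V \<noteq> {}"
  \<comment> \<open>fold both copies of [0, 1] onto one and use that the rotation is Touhey there\<close>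
  define folded :: "real set \<Rightarrow> real set"
    where "folded W = {t \<in> {0..1}. t \<in> W \<or> t + 2 \<in> W}" for W
  have folded: "openin (top_of_set {0..1}) (folded W)" "folded W \<noteq> {}"
    if W: "openin (top_of_set two_intervals) W" "W \<noteq> {}" for W
  proof -
    obtain G where G: "open G" "W = two_intervals \<inter> G"
      using W(1) by (auto simp: openin_open)
    then have "folded W = {0..1} \<inter> (G \<union> (\<lambda>t. t + 2) -` G)"
      by (auto simp: folded_def two_intervals_def)
    moreover have "open ((\<lambda>t. t + 2) -` G)"
      using G(1) by (intro continuous_open_vimage) auto
    ultimately show "openin (top_of_set {0..1}) (folded W)"
      using G(1) by (auto simp: openin_open)
    obtain w where "w \<in> W"
      using W(2) by blast
    with G(2) have "w \<in> folded W \<or> w - 2 \<in> folded W"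
      by (auto simp: folded_def two_intervals_def)
    then show "folded W \<noteq> {}"
      by blast
  qed
  obtain t p k where t: "t \<in> folded U" "p \<ge> 1" "(dyadic_rotation ^^ p) t = t"
    and "(dyadic_rotation ^^ k) t \<in> folded V"
    using dyadic_rotation_touhey[unfolded touhey_def, rule_format,
        OF folded(1)[OF U \<open>U \<noteq> {}\<close>] folded(1)[OF V \<open>V \<noteq> {}\<close>]
        folded(2)[OF U \<open>U \<noteq> {}\<close>] folded(2)[OF V \<open>V \<noteq> {}\<close>]]
    by blast
  then obtain s s' where s: "s \<in> U" "s \<in> {t, t + 2}"
    and s': "s' \<in> V" "s' \<in> {(dyadic_rotation ^^ k) t, (dyadic_rotation ^^ k) t + 2}"
    by (auto simp: folded_def)
  have "t \<in> {0..1}"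
    using t(1) by (simp add: folded_def)
  from swap_rotation_periodic_orbit[OF this t(3,2) s(2) s'(2)]
  have "(swap_rotation ^^ (2 * p)) s = s" "\<exists>j. (swap_rotation ^^ j) s = s'" .
  moreover have "1 \<le> 2 * p"
    using t(2) by simp
  ultimately show
    "\<exists>z\<in>U. (\<exists>m\<ge>1. (swap_rotation ^^ m) z = z) \<and> (\<exists>k. (swap_rotation ^^ k) z \<in> V)"
    using s(1) s'(1) by blast
qed

lemma Fn_swap_rotation_not_touhey:
  "\<not> touhey (Fn_top 2 (top_of_set two_intervals)) (Fn_map swap_rotation)"
proof
  let ?X = "top_of_set two_intervals"
  assume touhey: "touhey (Fn_top 2 ?X) (Fn_map swap_rotation)"
  have left: "openin ?X {0..1}"
    unfolding openin_open by (rule exI[of _ "{..<3/2}"]) (auto simp: two_intervals_def)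
  have right: "openin ?X {2..3}"
    unfolding openin_open by (rule exI[of _ "{3/2<..}"]) (auto simp: two_intervals_def)
  define U where "U = {A \<in> fin_subsets 2 ?X. A \<subseteq> {0..1}}"
  define V where "V = {A \<in> fin_subsets 2 ?X. A \<inter> {0..1} \<noteq> {}} \<inter>
    {A \<in> fin_subsets 2 ?X. A \<inter> {2..3} \<noteq> {}}"
  have U: "openin (Fn_top 2 ?X) U"
    unfolding U_def by (rule openin_Fn_top_subsets[OF left])
  have V: "openin (Fn_top 2 ?X) V"
    unfolding V_def
    by (rule openin_Int[OF openin_Fn_top_meets[OF left] openin_Fn_top_meets[OF right]])
  have "{0} \<in> U" "{0, 2} \<in> V"
    unfolding U_def V_def fin_subsets_def two_intervals_def by auto
  then have "U \<noteq> {}" "V \<noteq> {}"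
    by blast+
  then obtain A k where "A \<in> U" "(Fn_map swap_rotation ^^ k) A \<in> V"
    using touhey[unfolded touhey_def, rule_format, OF U V] by blast
  then have A: "A \<subseteq> {0..1}" and "(swap_rotation ^^ k) ` A \<inter> {0..1} \<noteq> {}"
    and "(swap_rotation ^^ k) ` A \<inter> {2..3} \<noteq> {}"
    by (simp_all add: U_def V_def Fn_map_funpow)
  then obtain p q where "p \<in> A" "(swap_rotation ^^ k) p \<in> {0..1}"
    and "q \<in> A" "(swap_rotation ^^ k) q \<in> {2..3}"
    by blast
  then show False
    using swap_rotation_funpow_parity[of p k] swap_rotation_funpow_parity[of q k] A
    by (cases "even k") auto
qed

theorem theorem21:
  shows "(\<forall>(X::'a topology) (n::nat) (f::'a \<Rightarrow> 'a).
            compactum X \<and> n \<ge> 2 \<and> f ` topspace X \<subseteq> topspace X \<longrightarrow>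
              (touhey (Fn_top n X) (Fn_map f) \<longleftrightarrow> touhey (SF_top n X) (SF_map X f)) \<and>
              (touhey (Fn_top n X) (Fn_map f) \<longrightarrow> touhey X f))
       \<and> (\<exists>(X::real topology) (n::nat) (f::real \<Rightarrow> real).
            compactum X \<and> n \<ge> 2 \<and> f ` topspace X \<subseteq> topspace X \<and>
            touhey X f \<and> \<not> touhey (Fn_top n X) (Fn_map f))"
proof (intro conjI allI impI)
  fix X :: "'a topology" and n :: nat and f :: "'a \<Rightarrow> 'a"
  assume "compactum X \<and> n \<ge> 2 \<and> f ` topspace X \<subseteq> topspace X"
  then have X: "Hausdorff_space X" "X derived_set_of topspace X = topspace X"
    and n: "n \<ge> 2" and f: "f ` topspace X \<subseteq> topspace X"
    by (auto simp: compactum_def)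
  show "touhey (Fn_top n X) (Fn_map f) \<longleftrightarrow> touhey (SF_top n X) (SF_map X f)"
    by (rule touhey_Fn_top_iff_touhey_SF_top[OF X n f])
  show "touhey (Fn_top n X) (Fn_map f) \<Longrightarrow> touhey X f"
    using n by (auto intro: touhey_if_touhey_Fn_top)
next
  show "\<exists>(X::real topology) (n::nat) (f::real \<Rightarrow> real).
      compactum X \<and> n \<ge> 2 \<and> f ` topspace X \<subseteq> topspace X \<and>
      touhey X f \<and> \<not> touhey (Fn_top n X) (Fn_map f)"
    using compactum_two_intervals swap_rotation_maps swap_rotation_touhey
      Fn_swap_rotation_not_touhey
    by (intro exI[of _ "top_of_set two_intervals"] exI[of _ 2] exI[of _ swap_rotation]) simp
qed

end
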